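(* Let $I=\langle Q,D,\tau_{in},\tau_{out}\rangle$ be an instance of DTP where $Q$ is nonrecursive, connected, and contains no rigid atoms. Then DTP holds for $I$ if and only if for every tuple $\vec o$ over $C_I$, $\vec o\in Q(D\cup B_I,\tau_{out})$ implies $\vec o\in Q(D,\tau_{out})$, where $B_I$ is the bounded critical update of $I$.
   Context: Temporal Datalog. Constants are partitioned into objects and integer time points; variables into object variables and time variables. A time term is a time point, a time variable, or an expression $t+k$ with $t$ a time variable and $k\in\mathbb{Z}$. Each predicate is either extensional (EDB) or intensional (IDB) and has an arity $n\ge0$, each position being of object sort or time sort; a predicate is rigid if all its positions are of object sort, and temporal if its last position is of time sort and all others are of object sort. An atom $P(t_1,\dots,t_n)$ has terms of the required sorts. A rule is $\bigwedge_i\alpha_i\to\alpha$ with $\alpha$ and all $\alpha_i$ rigid or temporal atoms, $\alpha$ IDB whenever the body is nonempty, and every head variable occurring in the body. A program is a finite set of rules. A fact is a ground rigid or temporal atom without $+$ (identified with the rule $\top\to\alpha$); a dataset is a finite set of EDB facts. Rules are read as universally quantified first-order sentences with $+$ interpreted as integer addition; $\Pi\models\alpha$ denotes entailment. A query is $Q=\langle P_Q,\Pi_Q\rangle$ with $\Pi_Q$ a program and $P_Q$ an IDB predicate of $\Pi_Q$; it is temporal if $P_Q$ is temporal. For a temporal query $Q$, dataset $D$ and time point $\tau$, $Q(D,\tau)$ is the set of tuples of objects $\vec o$ with $\Pi_Q\cup D\models P_Q(\vec o,\tau)$. A $\tau_{in}$-history is a dataset consisting of rigid facts and temporal facts with time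 argument $\le\tau_{in}$; a $\tau_{in}$-update is a dataset consisting of temporal facts with time argument $>\tau_{in}$. Definitive Time Point (DTP): an instance is $\langle Q,D,\tau_{in},\tau_{out}\rangle$ with $Q$ a temporal query, $D$ a $\tau_{in}$-history and $\tau_{out}\le\tau_{in}$; DTP holds for it iff $Q(D,\tau_{out})=Q(D\cup U,\tau_{out})$ for every $\tau_{in}$-update $U$. Critical domain: $C_I$ is the set of all objects occurring in $\Pi_Q\cup D$ together with one fresh object $o_I$. Predicate $P$ depends on $P'$ in $\Pi$ if some rule of $\Pi$ has $P$ in the head and $P'$ in the body; $\Pi$ (or a query with program $\Pi$) is nonrecursive if the graph of this dependency relation is acyclic. A rule is connected if it contains at most one time variable and, if a time variable occurs in the body, it also occurs in the head; a query is connected if all its rules are. For a time term $s$, $\Delta(s)=k$ if $s=t+k$ with $t$ a variable, and $\Delta(s)=0$ otherwise. The radius of a connected rule $r$ mentioning a time variable is the maximum of $|\Delta(s)-\Delta(s')|$ where $s$ is the time argument of the head and $s'$ the time argument of a body atom of $r$. The radius $\mathrm{rad}(\Pi)$ of a connected program is the number of rules of $\Pi$ times the maximum radius of a rule of $\Pi$. Bounded critical update: let $\tau_0$ be the maximum of $\tau_{out}$ and the largest time point occurring in $\Pi_Q$; a time point $\tau$ is critical for $I$ if $\tau_{in}<\tau\le\tau_0+\mathrm{rad}(\Pi_Q)$; $B_I$ consists of all facts $P(\vec o,\tau)$ with $P$ a temporal EDB predicate of $\Pi_Q$, $\vec o$ a tuple over $C_I$ and $\tau$ critical. *)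

theory Defs
  imports Main
begin

text \<open>Objects are represented by natural numbers, time points by integers.
Object variables and time variables are indexed by natural numbers (separate namespaces).\<close>

datatype oterm = OConst nat | OVar nat

text \<open>Time terms: a time point, or TVar v k standing for t_v + k (plain variable t_v is TVar v 0).\<close>
datatype tterm = TPt int | TVar nat int

text \<open>Kind of a predicate: rigid with n object positions, or temporal with n object
positions followed by one time position. (Predicates of other sort patterns can never
occur in rules or facts, so they are omitted.)\<close>
datatype pkind = Rigid nat | Temporal nat

record 'p signature =
  is_edb :: "'p \<Rightarrow> bool"
  kind :: "'p \<Rightarrow> pkind"

datatype 'p atom = Atom 'p "oterm list" "tterm option"
datatype 'p rule = Rule "'p atom list" "'p atom"
datatype 'p fact = Fact 'p "nat list" "int option"

fun atom_pred :: "'p atom \<Rightarrow> 'p" where "atom_pred (Atom p _ _) = p"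
fun atom_objs :: "'p atom \<Rightarrow> oterm list" where "atom_objs (Atom _ os _) = os"
fun atom_time :: "'p atom \<Rightarrow> tterm option" where "atom_time (Atom _ _ t) = t"

fun body :: "'p rule \<Rightarrow> 'p atom list" where "body (Rule b h) = b"
fun head :: "'p rule \<Rightarrow> 'p atom" where "head (Rule b h) = h"

fun fact_pred :: "'p fact \<Rightarrow> 'p" where "fact_pred (Fact p _ _) = p"
fun fact_objs :: "'p fact \<Rightarrow> nat list" where "fact_objs (Fact _ os _) = os"
fun fact_time :: "'p fact \<Rightarrow> int option" where "fact_time (Fact _ _ t) = t"

definition is_temporal :: "'p signature \<Rightarrow> 'p \<Rightarrow> bool" where
  "is_temporal S p = (\<exists>n. kind S p = Temporal n)"

fun wf_atom :: "'p signature \<Rightarrow> 'p atom \<Rightarrow> bool" where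
  "wf_atom S (Atom p os t) =
     (case kind S p of Rigid n \<Rightarrow> length os = n \<and> t = None
                     | Temporal n \<Rightarrow> length os = n \<and> t \<noteq> None)"

fun wf_fact :: "'p signature \<Rightarrow> 'p fact \<Rightarrow> bool" where
  "wf_fact S (Fact p os t) =
     (case kind S p of Rigid n \<Rightarrow> length os = n \<and> t = None
                     | Temporal n \<Rightarrow> length os = n \<and> t \<noteq> None)"

fun tvars_tterm :: "tterm \<Rightarrow> nat set" where
  "tvars_tterm (TPt _) = {}"
| "tvars_tterm (TVar v _) = {v}"

definition ovars_atom :: "'p atom \<Rightarrow> nat set" where
  "ovars_atom a = {v. OVar v \<in> set (atom_objs a)}"

definition tvars_atom :: "'p atom \<Rightarrow> nat set" where
  "tvars_atom a = (case atom_time a of None \<Rightarrow> {} | Some s \<Rightarrow> tvars_tterm s)"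

definition atoms_rule :: "'p rule \<Rightarrow> 'p atom set" where
  "atoms_rule r = insert (head r) (set (body r))"

definition atoms_prog :: "'p rule set \<Rightarrow> 'p atom set" where
  "atoms_prog P = (\<Union>r\<in>P. atoms_rule r)"

definition preds_prog :: "'p rule set \<Rightarrow> 'p set" where
  "preds_prog P = atom_pred ` atoms_prog P"

definition wf_rule :: "'p signature \<Rightarrow> 'p rule \<Rightarrow> bool" where
  "wf_rule S r =
     ((\<forall>a\<in>atoms_rule r. wf_atom S a)
      \<and> (body r \<noteq> [] \<longrightarrow> \<not> is_edb S (atom_pred (head r)))
      \<and> ovars_atom (head r) \<subseteq> (\<Union>b\<in>set (body r). ovars_atom b)
      \<and> tvars_atom (head r) \<subseteq> (\<Union>b\<in>set (body r). tvars_atom b))"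

definition wf_program :: "'p signature \<Rightarrow> 'p rule set \<Rightarrow> bool" where
  "wf_program S P = (finite P \<and> (\<forall>r\<in>P. wf_rule S r))"

definition dataset :: "'p signature \<Rightarrow> 'p fact set \<Rightarrow> bool" where
  "dataset S D = (finite D \<and> (\<forall>f\<in>D. wf_fact S f \<and> is_edb S (fact_pred f)))"

fun eval_o :: "(nat \<Rightarrow> nat) \<Rightarrow> oterm \<Rightarrow> nat" where
  "eval_o \<sigma> (OConst c) = c"
| "eval_o \<sigma> (OVar v) = \<sigma> v"

fun eval_t :: "(nat \<Rightarrow> int) \<Rightarrow> tterm \<Rightarrow> int" where
  "eval_t \<theta> (TPt \<tau>) = \<tau>"
| "eval_t \<theta> (TVar v k) = \<theta> v + k"

fun ground_atom :: "(nat \<Rightarrow> nat) \<Rightarrow> (nat \<Rightarrow> int) \<Rightarrow> 'p atom \<Rightarrow> 'p fact" where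
  "ground_atom \<sigma> \<theta> (Atom p os t) = Fact p (map (eval_o \<sigma>) os) (map_option (eval_t \<theta>) t)"

definition is_model :: "'p rule set \<Rightarrow> 'p fact set \<Rightarrow> bool" where
  "is_model P M = (\<forall>r\<in>P. \<forall>\<sigma> \<theta>. (\<forall>b\<in>set (body r). ground_atom \<sigma> \<theta> b \<in> M)
                                     \<longrightarrow> ground_atom \<sigma> \<theta> (head r) \<in> M)"

definition entails :: "'p rule set \<Rightarrow> 'p fact set \<Rightarrow> 'p fact \<Rightarrow> bool" where
  "entails P D f = (\<forall>M. is_model P M \<and> D \<subseteq> M \<longrightarrow> f \<in> M)"

type_synonym 'p query = "'p \<times> 'p rule set"

definition temporal_query :: "'p signature \<Rightarrow> 'p query \<Rightarrow> bool" where
  "temporal_query S Q = (wf_program S (snd Q) \<and> fst Q \<in> preds_prog (snd Q)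
      \<and> \<not> is_edb S (fst Q) \<and> is_temporal S (fst Q))"

definition answers :: "'p query \<Rightarrow> 'p fact set \<Rightarrow> int \<Rightarrow> nat list set" where
  "answers Q D \<tau> = {os. entails (snd Q) D (Fact (fst Q) os (Some \<tau>))}"

definition history :: "'p signature \<Rightarrow> 'p fact set \<Rightarrow> int \<Rightarrow> bool" where
  "history S D \<tau>in = (dataset S D \<and> (\<forall>f\<in>D. \<forall>\<tau>. fact_time f = Some \<tau> \<longrightarrow> \<tau> \<le> \<tau>in))"

definition update :: "'p signature \<Rightarrow> 'p fact set \<Rightarrow> int \<Rightarrow> bool" where
  "update S U \<tau>in = (dataset S U \<and> (\<forall>f\<in>U. \<exists>\<tau>. fact_time f = Some \<tau> \<and> \<tau>in < \<tau>))"

definition DTP_instance :: "'p signature \<Rightarrow> 'p query \<Rightarrow> 'p fact set \<Rightarrow> int \<Rightarrow> int \<Rightarrow> bool" where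
  "DTP_instance S Q D \<tau>in \<tau>out = (temporal_query S Q \<and> history S D \<tau>in \<and> \<tau>out \<le> \<tau>in)"

definition DTP :: "'p signature \<Rightarrow> 'p query \<Rightarrow> 'p fact set \<Rightarrow> int \<Rightarrow> int \<Rightarrow> bool" where
  "DTP S Q D \<tau>in \<tau>out =
     (\<forall>U. update S U \<tau>in \<longrightarrow> answers Q D \<tau>out = answers Q (D \<union> U) \<tau>out)"

definition objs_prog :: "'p rule set \<Rightarrow> nat set" where
  "objs_prog P = {c. \<exists>a\<in>atoms_prog P. OConst c \<in> set (atom_objs a)}"

definition objs_data :: "'p fact set \<Rightarrow> nat set" where
  "objs_data D = (\<Union>f\<in>D. set (fact_objs f))"

definition fresh_obj :: "'p rule set \<Rightarrow> 'p fact set \<Rightarrow> nat" where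
  "fresh_obj P D = (SOME o'. o' \<notin> objs_prog P \<union> objs_data D)"

definition crit_dom :: "'p query \<Rightarrow> 'p fact set \<Rightarrow> nat set" where
  "crit_dom Q D = insert (fresh_obj (snd Q) D) (objs_prog (snd Q) \<union> objs_data D)"

definition depends :: "'p rule set \<Rightarrow> ('p \<times> 'p) set" where
  "depends P = {(atom_pred (head r), atom_pred b) | r b. r \<in> P \<and> b \<in> set (body r)}"

definition nonrecursive :: "'p rule set \<Rightarrow> bool" where
  "nonrecursive P = acyclic (depends P)"

definition tvars_rule :: "'p rule \<Rightarrow> nat set" where
  "tvars_rule r = (\<Union>a\<in>atoms_rule r. tvars_atom a)"

definition connected_rule :: "'p rule \<Rightarrow> bool" where
  "connected_rule r = (card (tvars_rule r) \<le> 1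
      \<and> (\<Union>b\<in>set (body r). tvars_atom b) \<subseteq> tvars_atom (head r))"

definition connected :: "'p rule set \<Rightarrow> bool" where
  "connected P = (\<forall>r\<in>P. connected_rule r)"

definition no_rigid_atoms :: "'p signature \<Rightarrow> 'p rule set \<Rightarrow> bool" where
  "no_rigid_atoms S P = (\<forall>a\<in>atoms_prog P. is_temporal S (atom_pred a))"

fun delta :: "tterm \<Rightarrow> int" where
  "delta (TPt _) = 0"
| "delta (TVar _ k) = k"

definition rule_radius :: "'p rule \<Rightarrow> int" where
  "rule_radius r =
     (if tvars_rule r = {} then 0 else
      (case atom_time (head r) of None \<Rightarrow> 0 | Some s \<Rightarrow>
        Max (insert 0 {\<bar>delta s - delta s'\<bar> | s'. \<exists>b\<in>set (body r). atom_time b = Some s'})))"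

definition prog_radius :: "'p rule set \<Rightarrow> int" where
  "prog_radius P = int (card P) * Max (insert 0 (rule_radius ` P))"

definition times_prog :: "'p rule set \<Rightarrow> int set" where
  "times_prog P = {\<tau>. \<exists>a\<in>atoms_prog P. atom_time a = Some (TPt \<tau>)}"

definition tau0 :: "'p rule set \<Rightarrow> int \<Rightarrow> int" where
  "tau0 P \<tau>out = Max (insert \<tau>out (times_prog P))"

definition critical :: "'p query \<Rightarrow> int \<Rightarrow> int \<Rightarrow> int \<Rightarrow> bool" where
  "critical Q \<tau>in \<tau>out \<tau> = (\<tau>in < \<tau> \<and> \<tau> \<le> tau0 (snd Q) \<tau>out + prog_radius (snd Q))"

definition bounded_crit_update ::
  "'p signature \<Rightarrow> 'p query \<Rightarrow> 'p fact set \<Rightarrow> int \<Rightarrow> int \<Rightarrow> 'p fact set" where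
  "bounded_crit_update S Q D \<tau>in \<tau>out =
     {Fact p os (Some \<tau>) | p os \<tau> n.
        p \<in> preds_prog (snd Q) \<and> is_edb S p \<and> kind S p = Temporal n
        \<and> length os = n \<and> set os \<subseteq> crit_dom Q D \<and> critical Q \<tau>in \<tau>out \<tau>}"

end

theory Submission
  imports Defs
begin

text \<open>The update \<open>B\<^sub>I\<close> is itself a \<open>\<tau>\<^sub>i\<^sub>n\<close>-update, which gives one direction. Conversely, take an
update \<open>U\<close> and a new answer \<open>o\<close>. Collapsing every object outside the constants of the program and
the history to the fresh object \<open>o\<^sub>I\<close> is a homomorphism fixing the program, so it maps the
derivation of \<open>o\<close> from \<open>D \<union> U\<close> to a derivation from a set of facts over \<open>C\<^sub>I\<close>. Because the
program is nonrecursive and connected, a predicate of dependency depth \<open>d\<close> can only see facts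
at most \<open>d \<cdot> rad\<close> time steps ahead of its own time argument, so adding all facts beyond these
horizons does not change the answers at \<open>\<tau>\<^sub>o\<^sub>u\<^sub>t\<close>; what remains of the collapsed update lies in
\<open>B\<^sub>I\<close>. Finally, entailed facts only mention constants of the program and the history, so the
collapsed answer is \<open>o\<close> itself.\<close>

lemma atoms_progI: "r \<in> P \<Longrightarrow> a \<in> atoms_rule r \<Longrightarrow> a \<in> atoms_prog P"
  unfolding atoms_prog_def by blast

lemma entails_mono: "entails P D f \<Longrightarrow> D \<subseteq> D' \<Longrightarrow> entails P D' f"
  unfolding entails_def by blast

lemma answers_mono: "D \<subseteq> D' \<Longrightarrow> answers Q D \<tau> \<subseteq> answers Q D' \<tau>"
  unfolding answers_def using entails_mono by blast

subsection \<open>Renaming objects\<close>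

fun rename_fact :: "(nat \<Rightarrow> nat) \<Rightarrow> 'p fact \<Rightarrow> 'p fact" where
  "rename_fact h (Fact p os t) = Fact p (map h os) t"

lemma rename_ground_atom:
  assumes "\<forall>c. OConst c \<in> set (atom_objs a) \<longrightarrow> h c = c"
  shows "rename_fact h (ground_atom \<sigma> \<theta> a) = ground_atom (h \<circ> \<sigma>) \<theta> a"
proof (cases a)
  case (Atom p os t)
  have "h (eval_o \<sigma> x) = eval_o (h \<circ> \<sigma>) x" if "x \<in> set os" for x
    using assms Atom that by (cases x) auto
  then show ?thesis using Atom by simp
qed

lemma is_model_rename_preimage:
  assumes "is_model P M" and "\<forall>c\<in>objs_prog P. h c = c"
  shows "is_model P {f. rename_fact h f \<in> M}"
  unfolding is_model_def
proof (intro ballI allI impI)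
  fix r \<sigma> \<theta>
  assume r: "r \<in> P" and body: "\<forall>b\<in>set (body r). ground_atom \<sigma> \<theta> b \<in> {f. rename_fact h f \<in> M}"
  have rename: "rename_fact h (ground_atom \<sigma> \<theta> a) = ground_atom (h \<circ> \<sigma>) \<theta> a"
    if "a \<in> atoms_rule r" for a
    using assms(2) atoms_progI[OF r that] unfolding objs_prog_def by (blast intro: rename_ground_atom)
  have "\<forall>b\<in>set (body r). ground_atom (h \<circ> \<sigma>) \<theta> b \<in> M"
    using body rename unfolding atoms_rule_def by auto
  then have "ground_atom (h \<circ> \<sigma>) \<theta> (head r) \<in> M"
    using assms(1) r unfolding is_model_def by blast
  then show "ground_atom \<sigma> \<theta> (head r) \<in> {f. rename_fact h f \<in> M}"
    using rename[of "head r"] unfolding atoms_rule_def by auto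
qed

lemma entails_rename:
  assumes "entails P D f" and "\<forall>c\<in>objs_prog P. h c = c"
  shows "entails P (rename_fact h ` D) (rename_fact h f)"
  unfolding entails_def
proof (intro allI impI)
  fix M assume "is_model P M \<and> rename_fact h ` D \<subseteq> M"
  then have "f \<in> {f. rename_fact h f \<in> M}"
    using assms is_model_rename_preimage[of P M h] unfolding entails_def by blast
  then show "rename_fact h f \<in> M" by simp
qed

definition collapse :: "nat set \<Rightarrow> nat \<Rightarrow> nat \<Rightarrow> nat" where
  "collapse C o' x = (if x \<in> C then x else o')"

lemma map_collapse_eq_self: "set os \<subseteq> C \<Longrightarrow> map (collapse C o') os = os"
  by (induction os) (auto simp: collapse_def)

lemma set_map_collapse_subset: "set (map (collapse C o') os) \<subseteq> insert o' C"
  by (auto simp: collapse_def)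

lemma set_subset_if_map_collapse_subset:
  "o' \<notin> C \<Longrightarrow> set (map (collapse C o') os) \<subseteq> C \<Longrightarrow> set os \<subseteq> C"
  by (auto simp: collapse_def split: if_splits)

lemma is_model_objs_within:
  assumes "wf_program S P" and "objs_prog P \<subseteq> C"
  shows "is_model P {f. set (fact_objs f) \<subseteq> C}"
  unfolding is_model_def
proof (intro ballI allI impI)
  fix r \<sigma> \<theta>
  assume r: "r \<in> P" and body: "\<forall>b\<in>set (body r). ground_atom \<sigma> \<theta> b \<in> {f. set (fact_objs f) \<subseteq> C}"
  obtain p xs t where head: "head r = Atom p xs t" by (cases "head r")
  have "eval_o \<sigma> x \<in> C" if x: "x \<in> set xs" for x
  proof (cases x)
    case (OConst c)
    then have "c \<in> objs_prog P"
      using atoms_progI[OF r, of "head r"] head x by (force simp: objs_prog_def atoms_rule_def)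
    then show ?thesis using OConst assms(2) by auto
  next
    case (OVar v)
    then have "v \<in> ovars_atom (head r)" using head x by (simp add: ovars_atom_def)
    then obtain b where b: "b \<in> set (body r)" "v \<in> ovars_atom b"
      using assms(1) r unfolding wf_program_def wf_rule_def by blast
    obtain q ys u where "b = Atom q ys u" by (cases b)
    then show ?thesis using body b OVar by (force simp: ovars_atom_def)
  qed
  then show "ground_atom \<sigma> \<theta> (head r) \<in> {f. set (fact_objs f) \<subseteq> C}"
    using head by auto
qed

lemma entails_objs_within:
  assumes "wf_program S P" and "entails P D f"
  shows "set (fact_objs f) \<subseteq> objs_prog P \<union> objs_data D"
proof -
  have "D \<subseteq> {f. set (fact_objs f) \<subseteq> objs_prog P \<union> objs_data D}"
    unfolding objs_data_def by auto
  then show ?thesis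
    using assms is_model_objs_within[OF assms(1), of "objs_prog P \<union> objs_data D"]
    unfolding entails_def by blast
qed

subsection \<open>Time horizons of nonrecursive connected programs\<close>

definition max_rule_radius :: "'p rule set \<Rightarrow> int" where
  "max_rule_radius P = Max (insert 0 (rule_radius ` P))"

definition foreign_facts :: "'p rule set \<Rightarrow> 'p fact set" where
  "foreign_facts P = {f. fact_pred f \<notin> preds_prog P}"

definition beyond_horizon :: "('p \<Rightarrow> int) \<Rightarrow> 'p fact set" where
  "beyond_horizon w = {f. \<exists>\<tau>. fact_time f = Some \<tau> \<and> w (fact_pred f) < \<tau>}"

lemma acyclic_depends_rank:
  assumes "finite P" and "acyclic (depends P)"
  obtains d :: "'p \<Rightarrow> nat"
  where "\<forall>r\<in>P. \<forall>b\<in>set (body r). d (atom_pred (head r)) < d (atom_pred b)"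
    and "\<forall>p. d p \<le> card P"
proof -
  define A where "A q = {r\<in>P. (atom_pred (head r), q) \<in> (depends P)\<^sup>+}" for q
  define d where "d q = card (A q)" for q
  have "d (atom_pred (head r)) < d (atom_pred b)" if r: "r \<in> P" and b: "b \<in> set (body r)" for r b
  proof -
    let ?p = "atom_pred (head r)" and ?q = "atom_pred b"
    have edge: "(?p, ?q) \<in> depends P" using r b unfolding depends_def by blast
    have "A ?p \<subseteq> A ?q" unfolding A_def using edge by (auto intro: trancl_into_trancl)
    moreover have "r \<in> A ?q" unfolding A_def using edge r by auto
    moreover have "r \<notin> A ?p" using assms(2) unfolding A_def acyclic_def by auto
    ultimately have "A ?p \<subset> A ?q" by blast
    moreover have "finite (A ?q)" unfolding A_def using assms(1) by auto
    ultimately show ?thesis unfolding d_def by (rule psubset_card_mono[rotated])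
  qed
  moreover have "d p \<le> card P" for p
    unfolding d_def A_def by (rule card_mono[OF assms(1)]) auto
  ultimately show thesis using that by blast
qed

lemma nonrecursive_horizon:
  assumes "finite P" and "nonrecursive P"
  obtains w :: "'p \<Rightarrow> int"
  where "\<forall>r\<in>P. \<forall>b\<in>set (body r). w (atom_pred (head r)) + max_rule_radius P \<le> w (atom_pred b)"
    and "\<forall>p. T \<le> w p \<and> w p \<le> T + prog_radius P"
proof -
  let ?R = "max_rule_radius P"
  obtain d where d: "\<forall>r\<in>P. \<forall>b\<in>set (body r). d (atom_pred (head r)) < d (atom_pred b)"
    and d_le: "\<forall>p. d p \<le> card P"
    using acyclic_depends_rank assms unfolding nonrecursive_def by blast
  have R: "0 \<le> ?R" unfolding max_rule_radius_def using assms(1) by simp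
  define w where "w p = T + ?R * int (d p)" for p
  have "w (atom_pred (head r)) + ?R \<le> w (atom_pred b)" if "r \<in> P" "b \<in> set (body r)" for r b
  proof -
    have "int (d (atom_pred (head r))) + 1 \<le> int (d (atom_pred b))" using d that by force
    then have "?R * (int (d (atom_pred (head r))) + 1) \<le> ?R * int (d (atom_pred b))"
      using R by (rule mult_left_mono)
    then show ?thesis unfolding w_def by (simp add: algebra_simps)
  qed
  moreover have "T \<le> w p \<and> w p \<le> T + prog_radius P" for p
    using R mult_left_mono[OF _ R, of "int (d p)" "int (card P)"] d_le
    unfolding w_def prog_radius_def max_rule_radius_def by (simp add: mult.commute)
  ultimately show thesis using that by blast
qed

lemma atom_has_time:
  assumes "wf_program S P" "no_rigid_atoms S P" "r \<in> P" "a \<in> atoms_rule r"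
  obtains q os s where "a = Atom q os (Some s)"
proof -
  have "wf_atom S a" using assms(1,3,4) unfolding wf_program_def wf_rule_def by blast
  moreover have "is_temporal S (atom_pred a)"
    using assms(2) atoms_progI[OF assms(3,4)] unfolding no_rigid_atoms_def by blast
  ultimately show thesis using that by (cases a) (auto simp: is_temporal_def)
qed

lemma rule_radius_ge:
  assumes "v \<in> tvars_rule r" "atom_time (head r) = Some s" "b \<in> set (body r)"
    "atom_time b = Some s'"
  shows "\<bar>delta s - delta s'\<bar> \<le> rule_radius r"
proof -
  let ?X = "{\<bar>delta s - delta s'\<bar> | s'. \<exists>b\<in>set (body r). atom_time b = Some s'}"
  have "?X \<subseteq> (\<lambda>b. case atom_time b of Some s' \<Rightarrow> \<bar>delta s - delta s'\<bar>) ` set (body r)"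
    by force
  then have "finite ?X" by (rule finite_subset) simp
  moreover have "\<bar>delta s - delta s'\<bar> \<in> insert 0 ?X" using assms(3,4) by blast
  ultimately show ?thesis using assms(1,2) unfolding rule_radius_def by auto
qed

text \<open>A body atom of a connected rule lies at most \<open>R\<close> time steps after the head, and its
predicate has a horizon at least \<open>R\<close> beyond that of the head predicate; so if the head is within
its horizon, every body atom is within its horizon, where the extension added nothing.\<close>

lemma is_model_extend_beyond_horizon:
  assumes wf: "wf_program S P" and no_rigid: "no_rigid_atoms S P" and conn: "connected P"
    and M: "is_model P M"
    and R: "\<forall>r\<in>P. rule_radius r \<le> R"
    and w_step: "\<forall>r\<in>P. \<forall>b\<in>set (body r). w (atom_pred (head r)) + R \<le> w (atom_pred b)"
    and w_times: "\<forall>\<tau>\<in>times_prog P. \<forall>p. \<tau> \<le> w p"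
  shows "is_model P (M \<union> (foreign_facts P \<union> beyond_horizon w))" (is "is_model P ?M")
  unfolding is_model_def
proof (intro ballI allI impI)
  fix r \<sigma> \<theta> assume r: "r \<in> P" and body: "\<forall>b\<in>set (body r). ground_atom \<sigma> \<theta> b \<in> ?M"
  obtain p os s where head: "head r = Atom p os (Some s)"
    using atom_has_time[OF wf no_rigid r, of "head r"] unfolding atoms_rule_def by blast
  show "ground_atom \<sigma> \<theta> (head r) \<in> ?M"
  proof (cases "w p < eval_t \<theta> s")
    case True
    then show ?thesis using head by (simp add: beyond_horizon_def)
  next
    case False
    have "ground_atom \<sigma> \<theta> b \<in> M" if b: "b \<in> set (body r)" for b
    proof -
      have b_atom: "b \<in> atoms_rule r" using b unfolding atoms_rule_def by simp
      obtain q os' s' where b_eq: "b = Atom q os' (Some s')"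
        using atom_has_time[OF wf no_rigid r b_atom] by blast
      have q: "q \<in> preds_prog P"
        using atoms_progI[OF r b_atom] b_eq unfolding preds_prog_def by force
      have "eval_t \<theta> s' \<le> w q"
      proof (cases s')
        case (TPt \<tau>)
        then have "\<tau> \<in> times_prog P"
          using atoms_progI[OF r b_atom] b_eq unfolding times_prog_def by force
        then show ?thesis using w_times TPt by simp
      next
        case (TVar v k')
        have v_body: "v \<in> tvars_atom b" using b_eq TVar by (simp add: tvars_atom_def)
        then have "v \<in> tvars_atom (head r)"
          using conn r b unfolding connected_def connected_rule_def by blast
        then obtain k where s: "s = TVar v k" using head
          by (cases s) (auto simp: tvars_atom_def)
        have "v \<in> tvars_rule r" using v_body b_atom unfolding tvars_rule_def by blast
        then have "\<bar>delta s - delta s'\<bar> \<le> rule_radius r"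
          using rule_radius_ge[OF _ _ b] head b_eq by simp
        then have "k' - k \<le> R" using R r s TVar by force
        moreover have "w p + R \<le> w q" using w_step r b head b_eq by force
        ultimately show ?thesis using False s TVar by simp
      qed
      moreover have "ground_atom \<sigma> \<theta> b \<in> ?M" using body b by blast
      ultimately show ?thesis using q b_eq by (auto simp: foreign_facts_def beyond_horizon_def)
    qed
    then show ?thesis using M r unfolding is_model_def by blast
  qed
qed

lemma entails_via_model_extension:
  assumes "\<And>M. is_model P M \<Longrightarrow> is_model P (M \<union> X)"
    and "entails P D' f" and "D' \<subseteq> D \<union> X" and "f \<notin> X"
  shows "entails P D f"
  unfolding entails_def
proof (intro allI impI)
  fix M assume "is_model P M \<and> D \<subseteq> M"
  then have "f \<in> M \<union> X" using assms(1-3) unfolding entails_def by blast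
  then show "f \<in> M" using assms(4) by blast
qed

lemma finite_atoms_prog: "finite P \<Longrightarrow> finite (atoms_prog P)"
  unfolding atoms_prog_def atoms_rule_def by auto

lemma finite_objs_prog:
  assumes "finite P"
  shows "finite (objs_prog P)"
proof -
  have "objs_prog P \<subseteq> (\<Union>a\<in>atoms_prog P. (\<lambda>x. case x of OConst c \<Rightarrow> c) ` set (atom_objs a))"
    unfolding objs_prog_def by force
  moreover have "finite (\<Union>a\<in>atoms_prog P. (\<lambda>x. case x of OConst c \<Rightarrow> c) ` set (atom_objs a))"
    using finite_atoms_prog[OF assms] by blast
  ultimately show ?thesis by (rule finite_subset)
qed

lemma finite_times_prog:
  assumes "finite P"
  shows "finite (times_prog P)"
proof -
  have "times_prog P \<subseteq> (\<lambda>a. case atom_time a of Some (TPt \<tau>) \<Rightarrow> \<tau>) ` atoms_prog P"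
    unfolding times_prog_def by force
  then show ?thesis using finite_atoms_prog[OF assms] by (meson finite_imageI finite_subset)
qed

lemma finite_preds_prog: "finite P \<Longrightarrow> finite (preds_prog P)"
  unfolding preds_prog_def using finite_atoms_prog by auto

lemma finite_objs_data: "finite D \<Longrightarrow> finite (objs_data D)"
  unfolding objs_data_def by auto

lemma fresh_obj_notin:
  assumes "finite P" and "finite D"
  shows "fresh_obj P D \<notin> objs_prog P \<union> objs_data D"
proof -
  have "finite (objs_prog P \<union> objs_data D)"
    using finite_objs_prog[OF assms(1)] finite_objs_data[OF assms(2)] by simp
  then have "\<exists>x. x \<notin> objs_prog P \<union> objs_data D"
    using ex_new_if_finite[OF infinite_UNIV_nat] by blast
  then show ?thesis unfolding fresh_obj_def by (rule someI_ex)
qed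

lemma update_bounded_crit_update:
  assumes "finite (snd Q)" and "finite D"
  shows "update S (bounded_crit_update S Q D \<tau>in \<tau>out) \<tau>in"
proof -
  let ?B = "bounded_crit_update S Q D \<tau>in \<tau>out"
  let ?bound = "tau0 (snd Q) \<tau>out + prog_radius (snd Q)"
  define N where "N p = (case kind S p of Temporal n \<Rightarrow> n | Rigid n \<Rightarrow> n)" for p
  let ?Idx = "SIGMA p:preds_prog (snd Q).
    {os. set os \<subseteq> crit_dom Q D \<and> length os \<le> N p} \<times> {\<tau>in<..?bound}"
  have "?B \<subseteq> (\<lambda>(p, os, \<tau>). Fact p os (Some \<tau>)) ` ?Idx"
  proof
    fix f assume "f \<in> ?B"
    then obtain p os \<tau> n where f: "f = Fact p os (Some \<tau>)" "p \<in> preds_prog (snd Q)"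
      "kind S p = Temporal n" "length os = n" "set os \<subseteq> crit_dom Q D" "\<tau>in < \<tau>" "\<tau> \<le> ?bound"
      unfolding bounded_crit_update_def critical_def by blast
    then have "(p, os, \<tau>) \<in> ?Idx" unfolding N_def by simp
    then show "f \<in> (\<lambda>(p, os, \<tau>). Fact p os (Some \<tau>)) ` ?Idx"
      by (rule rev_image_eqI) (simp add: f(1))
  qed
  moreover have "finite (crit_dom Q D)"
    using finite_objs_prog[OF assms(1)] finite_objs_data[OF assms(2)] by (simp add: crit_dom_def)
  then have "finite ?Idx"
    using finite_preds_prog[OF assms(1)]
    by (intro finite_SigmaI finite_cartesian_product finite_lists_length_le) auto
  ultimately have "finite ?B" using finite_subset by blast
  then show ?thesis
    unfolding update_def dataset_def bounded_crit_update_def critical_def by auto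
qed

lemma rename_update_fact:
  assumes "update S U \<tau>in" and "f \<in> U" and "\<forall>x. h x \<in> crit_dom Q D"
    and "\<forall>p. w p \<le> tau0 (snd Q) \<tau>out + prog_radius (snd Q)"
  shows "rename_fact h f \<in>
    bounded_crit_update S Q D \<tau>in \<tau>out \<union> (foreign_facts (snd Q) \<union> beyond_horizon w)"
proof -
  obtain p xs t where f: "f = Fact p xs t" by (cases f)
  obtain \<tau> where t: "t = Some \<tau>" "\<tau>in < \<tau>" using assms(1,2) f unfolding update_def by auto
  have "wf_fact S f" and edb: "is_edb S p"
    using assms(1,2) f unfolding update_def dataset_def by auto
  then obtain n where "kind S p = Temporal n" "length xs = n"
    using f t by (cases "kind S p") auto
  moreover have "set (map h xs) \<subseteq> crit_dom Q D" using assms(3) by auto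
  ultimately show ?thesis
    using f t edb assms(4)[rule_format, of p]
    by (force simp: bounded_crit_update_def critical_def foreign_facts_def beyond_horizon_def)
qed

lemma answers_update_collapse:
  assumes inst: "DTP_instance S Q D \<tau>in \<tau>out"
    and nonrec: "nonrecursive (snd Q)" and conn: "connected (snd Q)"
    and no_rigid: "no_rigid_atoms S (snd Q)"
    and U: "update S U \<tau>in" and os: "os \<in> answers Q (D \<union> U) \<tau>out"
  defines "h \<equiv> collapse (objs_prog (snd Q) \<union> objs_data D) (fresh_obj (snd Q) D)"
  shows "map h os \<in> answers Q (D \<union> bounded_crit_update S Q D \<tau>in \<tau>out) \<tau>out"
proof -
  obtain PQ P where Q: "Q = (PQ, P)" by (cases Q)
  have wf: "wf_program S P" and fin: "finite P" and PQ: "PQ \<in> preds_prog P"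
    using inst unfolding DTP_instance_def temporal_query_def wf_program_def Q by auto
  obtain w where w_step: "\<forall>r\<in>P. \<forall>b\<in>set (body r).
      w (atom_pred (head r)) + max_rule_radius P \<le> w (atom_pred b)"
    and w_bounds: "\<forall>p. tau0 P \<tau>out \<le> w p \<and> w p \<le> tau0 P \<tau>out + prog_radius P"
    using nonrecursive_horizon[OF fin] nonrec unfolding Q by auto
  let ?X = "foreign_facts P \<union> beyond_horizon w"
  have tau0: "\<forall>\<tau>\<in>insert \<tau>out (times_prog P). \<tau> \<le> tau0 P \<tau>out"
    unfolding tau0_def using finite_times_prog[OF fin] by simp
  have radius: "\<forall>r\<in>P. rule_radius r \<le> max_rule_radius P"
    unfolding max_rule_radius_def using fin by simp
  have "\<forall>\<tau>\<in>times_prog P. \<forall>p. \<tau> \<le> w p"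
    using tau0 w_bounds by (meson insertCI order_trans)
  then have extend: "is_model P (M \<union> ?X)" if "is_model P M" for M
    using is_model_extend_beyond_horizon[OF wf _ _ that radius w_step] conn no_rigid
    unfolding Q by simp
  have "\<forall>c\<in>objs_prog P. h c = c" by (simp add: h_def collapse_def Q)
  then have renamed: "entails P (rename_fact h ` (D \<union> U)) (Fact PQ (map h os) (Some \<tau>out))"
    using entails_rename[of P "D \<union> U" "Fact PQ os (Some \<tau>out)" h] os
    unfolding answers_def Q by simp
  have "rename_fact h f = f" if "f \<in> D" for f
  proof -
    have "set (fact_objs f) \<subseteq> objs_prog P \<union> objs_data D"
      using that unfolding objs_data_def by auto
    then show ?thesis by (cases f) (simp add: h_def Q map_collapse_eq_self)
  qed
  then have D_fixed: "rename_fact h ` D \<subseteq> D" by simp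
  have "\<forall>x. h x \<in> crit_dom Q D" by (simp add: h_def collapse_def crit_dom_def Q)
  then have U_critical: "rename_fact h ` U \<subseteq> bounded_crit_update S Q D \<tau>in \<tau>out \<union> ?X"
    using rename_update_fact[OF U, where Q = Q and h = h and w = w and \<tau>out = \<tau>out] w_bounds
    unfolding Q by auto
  have "\<tau>out \<le> w PQ" using w_bounds tau0 by (meson insertI1 order_trans)
  then have "Fact PQ (map h os) (Some \<tau>out) \<notin> ?X"
    using PQ by (simp add: foreign_facts_def beyond_horizon_def)
  moreover have "rename_fact h ` (D \<union> U) \<subseteq> (D \<union> bounded_crit_update S Q D \<tau>in \<tau>out) \<union> ?X"
    using D_fixed U_critical by blast
  ultimately have "entails P (D \<union> bounded_crit_update S Q D \<tau>in \<tau>out) (Fact PQ (map h os) (Some \<tau>out))"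
    using entails_via_model_extension[OF extend renamed] by blast
  then show ?thesis unfolding answers_def Q by simp
qed

lemma answers_update_subset:
  assumes inst: "DTP_instance S Q D \<tau>in \<tau>out"
    and "nonrecursive (snd Q)" and "connected (snd Q)" and "no_rigid_atoms S (snd Q)"
    and "update S U \<tau>in"
    and crit: "\<forall>os. set os \<subseteq> crit_dom Q D \<longrightarrow>
       os \<in> answers Q (D \<union> bounded_crit_update S Q D \<tau>in \<tau>out) \<tau>out \<longrightarrow>
       os \<in> answers Q D \<tau>out"
  shows "answers Q (D \<union> U) \<tau>out \<subseteq> answers Q D \<tau>out"
proof
  fix os assume os: "os \<in> answers Q (D \<union> U) \<tau>out"
  let ?C = "objs_prog (snd Q) \<union> objs_data D" and ?o = "fresh_obj (snd Q) D"
  let ?os = "map (collapse ?C ?o) os"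
  have wf: "wf_program S (snd Q)" and fin: "finite (snd Q)" "finite D"
    using inst by (auto simp: DTP_instance_def temporal_query_def wf_program_def
        history_def dataset_def)
  have "set ?os \<subseteq> crit_dom Q D"
    using set_map_collapse_subset[of ?C ?o os] by (simp add: crit_dom_def)
  moreover have "?os \<in> answers Q (D \<union> bounded_crit_update S Q D \<tau>in \<tau>out) \<tau>out"
    using answers_update_collapse[OF assms(1-5) os] by simp
  ultimately have collapsed: "?os \<in> answers Q D \<tau>out"
    using crit by blast
  then have "set ?os \<subseteq> ?C"
    using entails_objs_within[OF wf, of D "Fact (fst Q) ?os (Some \<tau>out)"]
    by (simp add: answers_def)
  then have "set os \<subseteq> ?C"
    using set_subset_if_map_collapse_subset[OF fresh_obj_notin[OF fin]] by blast
  then show "os \<in> answers Q D \<tau>out" using collapsed by (simp add: map_collapse_eq_self)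
qed

theorem lemma5:
  fixes S :: "'p signature" and Q :: "'p query" and D :: "'p fact set"
    and \<tau>in \<tau>out :: int
  assumes "DTP_instance S Q D \<tau>in \<tau>out"
    and "nonrecursive (snd Q)"
    and "connected (snd Q)"
    and "no_rigid_atoms S (snd Q)"
  shows "DTP S Q D \<tau>in \<tau>out \<longleftrightarrow>
    (\<forall>os. set os \<subseteq> crit_dom Q D \<longrightarrow>
       os \<in> answers Q (D \<union> bounded_crit_update S Q D \<tau>in \<tau>out) \<tau>out \<longrightarrow>
       os \<in> answers Q D \<tau>out)"
proof -
  let ?B = "bounded_crit_update S Q D \<tau>in \<tau>out"
  have "finite (snd Q)" "finite D"
    using assms(1) by (auto simp: DTP_instance_def temporal_query_def wf_program_def
        history_def dataset_def)
  then have B: "update S ?B \<tau>in" by (rule update_bounded_crit_update)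
  show ?thesis
  proof
    assume "DTP S Q D \<tau>in \<tau>out"
    then have "answers Q D \<tau>out = answers Q (D \<union> ?B) \<tau>out"
      using B unfolding DTP_def by blast
    then show "\<forall>os. set os \<subseteq> crit_dom Q D \<longrightarrow> os \<in> answers Q (D \<union> ?B) \<tau>out \<longrightarrow>
        os \<in> answers Q D \<tau>out" by blast
  next
    assume "\<forall>os. set os \<subseteq> crit_dom Q D \<longrightarrow> os \<in> answers Q (D \<union> ?B) \<tau>out \<longrightarrow>
        os \<in> answers Q D \<tau>out"
    then have "answers Q (D \<union> U) \<tau>out \<subseteq> answers Q D \<tau>out" if "update S U \<tau>in" for U
      using answers_update_subset[OF assms that] by blast
    moreover have "answers Q D \<tau>out \<subseteq> answers Q (D \<union> U) \<tau>out" for U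
      by (rule answers_mono) simp
    ultimately show "DTP S Q D \<tau>in \<tau>out" unfolding DTP_def by blast
  qed
qed

end
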